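(* Let $\alpha\in(0,1]$ and let $n$ be such that $n^\alpha=2^q$ for a positive integer $q$. Let $p\in B_n$ and let $p'=p+v$ where $v$ is one of the vectors $(\pm n^\alpha,0)$, $(0,\pm n^\alpha)$. If $p'\in\mathrm{conv}(B_n)$, then $p'\in B_n$.
   Context: Let $A_n=\{(i,j)\in\mathbb{Z}^2: 0\le i,j\le 14n\}$. The sparse grid $B_n\subseteq A_n$ is the set of points of $A_n$ of at least one of the following forms: (1) $(i,j)$ with $n^\alpha \mid ij$; (2) $(i+k,j+k)$ with $n^\alpha\mid i$, $n^\alpha\mid j$, $k\in\{1,\dots,n^\alpha\}$; (3) $(i+k,j-k)$ with $n^\alpha\mid i$, $n^\alpha\mid j$, $k\in\{1,\dots,n^\alpha\}$. $\mathrm{conv}(B_n)$ denotes the convex hull of $B_n$. *)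

theory Defs
  imports "HOL-Analysis.Analysis"
begin

definition grid_A :: "nat \<Rightarrow> (int \<times> int) set" where
  "grid_A n = {(i, j). 0 \<le> i \<and> i \<le> 14 * int n \<and> 0 \<le> j \<and> j \<le> 14 * int n}"

text \<open>The sparse grid B_n, where the parameter m stands for n^alpha (an integer).\<close>
definition sparse_grid :: "nat \<Rightarrow> nat \<Rightarrow> (int \<times> int) set" where
  "sparse_grid n m = grid_A n \<inter>
     ({(i, j). int m dvd i * j}
      \<union> {(i + k, j + k) | i j k. int m dvd i \<and> int m dvd j \<and> 1 \<le> k \<and> k \<le> int m}
      \<union> {(i + k, j - k) | i j k. int m dvd i \<and> int m dvd j \<and> 1 \<le> k \<and> k \<le> int m})"

definition to_real2 :: "int \<times> int \<Rightarrow> real \<times> real" where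
  "to_real2 p = (real_of_int (fst p), real_of_int (snd p))"

end

theory Submission
  imports Defs
begin

text \<open>Membership in \<open>B\<^sub>n\<close> only depends on the point modulo \<open>n\<^sup>\<alpha>\<close> in each coordinate, so a translation
  by \<open>(\<plusminus>n\<^sup>\<alpha>, 0)\<close> or \<open>(0, \<plusminus>n\<^sup>\<alpha>)\<close> preserves it as long as the point stays in the box \<open>A\<^sub>n\<close>;
  and an integer point in the convex hull of a subset of \<open>A\<^sub>n\<close> lies in \<open>A\<^sub>n\<close>, the box being convex.
  Neither the value of \<open>\<alpha>\<close> nor the fact that \<open>n\<^sup>\<alpha>\<close> is a power of two is needed.\<close>

definition sparse_pattern :: "int \<Rightarrow> (int \<times> int) set" where
  "sparse_pattern m =
     {(i, j). m dvd i * j}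
     \<union> {(i + k, j + k) | i j k. m dvd i \<and> m dvd j \<and> 1 \<le> k \<and> k \<le> m}
     \<union> {(i + k, j - k) | i j k. m dvd i \<and> m dvd j \<and> 1 \<le> k \<and> k \<le> m}"

lemma sparse_grid_eq: "sparse_grid n m = grid_A n \<inter> sparse_pattern (int m)"
  unfolding sparse_grid_def sparse_pattern_def by simp

lemma sparse_pattern_translate:
  assumes "m dvd d" "m dvd e" "(a, b) \<in> sparse_pattern m"
  shows "(a + d, b + e) \<in> sparse_pattern m"
proof -
  consider "m dvd a * b"
    | i j k where "a = i + k" "b = j + k" "m dvd i" "m dvd j" "1 \<le> k" "k \<le> m"
    | i j k where "a = i + k" "b = j - k" "m dvd i" "m dvd j" "1 \<le> k" "k \<le> m"
    using assms(3) unfolding sparse_pattern_def by blast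
  then show ?thesis
  proof cases
    case 1
    have "(a + d) * (b + e) = a * b + (a * e + d * (b + e))"
      by (simp add: algebra_simps)
    then have "m dvd (a + d) * (b + e)"
      using 1 assms(1,2) by simp
    then show ?thesis unfolding sparse_pattern_def by blast
  next
    case 2
    then have "(a + d, b + e) = ((i + d) + k, (j + e) + k)" "m dvd i + d" "m dvd j + e"
      using assms(1,2) by simp_all
    then show ?thesis using 2 unfolding sparse_pattern_def by blast
  next
    case 3
    then have "(a + d, b + e) = ((i + d) + k, (j + e) - k)" "m dvd i + d" "m dvd j + e"
      using assms(1,2) by simp_all
    then show ?thesis using 3 unfolding sparse_pattern_def by blast
  qed
qed

lemma grid_A_convex_hull:
  assumes "to_real2 x \<in> convex hull (to_real2 ` X)" "X \<subseteq> grid_A n"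
  shows "x \<in> grid_A n"
proof -
  define box :: "(real \<times> real) set" where
    "box = {0 .. 14 * real n} \<times> {0 .. 14 * real n}"
  have "to_real2 ` X \<subseteq> box"
    using assms(2) unfolding box_def grid_A_def to_real2_def by auto
  moreover have "convex box"
    unfolding box_def by (simp add: convex_Times)
  ultimately have "convex hull (to_real2 ` X) \<subseteq> box"
    by (rule hull_minimal)
  then show ?thesis
    using assms(1) unfolding box_def grid_A_def to_real2_def by (auto split: prod.splits)
qed

theorem lemma6:
  fixes \<alpha> :: real and n q :: nat and p v :: "int \<times> int"
  assumes "0 < \<alpha>" and "\<alpha> \<le> 1"
    and "0 < q"
    and "real n powr \<alpha> = 2 ^ q"
    and "p \<in> sparse_grid n (2 ^ q)"
    and "v \<in> {(2 ^ q, 0), (- (2 ^ q), 0), (0, 2 ^ q), (0, - (2 ^ q))}"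
    and "to_real2 (fst p + fst v, snd p + snd v) \<in> convex hull (to_real2 ` sparse_grid n (2 ^ q))"
  shows "(fst p + fst v, snd p + snd v) \<in> sparse_grid n (2 ^ q)"
proof -
  have "(fst p + fst v, snd p + snd v) \<in> grid_A n"
    using assms(7) by (rule grid_A_convex_hull) (auto simp: sparse_grid_def)
  moreover have "(fst p + fst v, snd p + snd v) \<in> sparse_pattern (2 ^ q)"
  proof (rule sparse_pattern_translate)
    show "(fst p, snd p) \<in> sparse_pattern (2 ^ q)"
      using assms(5) by (simp add: sparse_grid_eq)
    show "2 ^ q dvd fst v" "2 ^ q dvd snd v"
      using assms(6) by auto
  qed
  ultimately show ?thesis
    by (simp add: sparse_grid_eq)
qed

end
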